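(* Let $N\ge 1$, let $\mathbf{W}^0$ be a real $N\times N$ matrix (the adjacency matrix), let $a,w\in\mathbb{R}$ and $S_x>0$, and assume the spectral radius of $a w\mathbf{W}^0$ is less than $1$. Define the (zero-frequency) cross-spectrum matrix $$\mathbf{S}_y=S_x\,(\mathbf{I}-a w\mathbf{W}^0)^{-1}(\mathbf{I}-a w(\mathbf{W}^0)^T)^{-1},$$ and set $g=N a w$. Let $\kappa_n$ ($n\ge1$) and $\kappa_{n,m}$ ($n,m\ge1$) be the motif cumulants of $\mathbf{W}^0$ defined below, and assume $\sum_{n\ge1}|g|^n|\kappa_n|<1$ and $\sum_{n,m\ge1}|g|^{n+m}|\kappa_{n,m}|<\infty$. Then $$\frac{\langle \mathbf{S}_y\rangle}{S_x}=\frac{1}{N}\Big(1-\sum_{n=1}^\infty g^n\kappa_n\Big)^{-2}\Big(1+\sum_{n,m=1}^\infty g^{n+m}\kappa_{n,m}\Big).$$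
   Context: This models a network of $N$ linearly interacting stochastic units $y_i=x_i+A*\sum_j \mathbf{W}_{ij}y_j$ with $\mathbf{W}=w\mathbf{W}^0$, identical independent baseline processes $x_i$ of auto-spectrum $S_x$, and $a=\tilde A(0)$ the (real) zero-frequency value of the Fourier transform of the linear response kernel; $\mathbf{S}_y$ above is then the matrix of total covariances. Notation: for an $N\times N$ matrix $\mathbf{X}$, $\langle\mathbf{X}\rangle=\frac1{N^2}\sum_{i,j}\mathbf{X}_{ij}$ (empirical average of the entries). Motif moments: for integers $n,m\ge0$, $\mu_{n,m}=\langle(\mathbf{W}^0)^n((\mathbf{W}^0)^T)^m\rangle/N^{n+m-1}$, and $\mu_n:=\mu_{n,0}$ (so $\mu_{0,0}=1$). A composition of a positive integer $n$ is an ordered tuple $(n_1,\dots,n_t)$ of positive integers with $n_1+\dots+n_t=n$; $\mathcal{C}(n)$ denotes the set of compositions of $n$. Motif cumulants: the numbers $\kappa_n$ ($n\ge1$) and $\kappa_{n,m}$ ($n,m\ge1$) are defined recursively (uniquely) by requiring, for all $n,m\ge1$, $$\mu_n=\sum_{(n_1,\dots,n_t)\in\mathcal{C}(n)}\prod_{i=1}^t\kappa_{n_i},\qquad \mu_{n,m}=\sum_{\substack{(n_1,\dots,n_t)\in\mathcal{C}(n)\\(m_1,\dots,m_s)\in\mathcal{C}(m)}}\Big(\prod_{i=2}^t\kappa_{n_i}\Big)\big(\kappa_{n_1,m_1}+\kappa_{n_1}\kappa_{m_1}\big)\Big(\prod_{j=2}^s\kappa_{m_j}\Big),$$ where an empty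 product equals $1$. *)

theory Defs
  imports "HOL-Analysis.Analysis" "Jordan_Normal_Form.Spectral_Radius"
    "Jordan_Normal_Form.Gauss_Jordan_Elimination"
begin

definition mavg :: "real mat \<Rightarrow> real" where
  "mavg X = (1 / (real (dim_row X))^2) *
     (\<Sum>i<dim_row X. \<Sum>j<dim_col X. X $$ (i, j))"

(* matrix inverse (the matrices used below are invertible) *)
definition minv :: "real mat \<Rightarrow> real mat" where
  "minv A = the (mat_inverse A)"

definition motif_moment :: "real mat \<Rightarrow> nat \<Rightarrow> nat \<Rightarrow> real" where
  "motif_moment W0 n m =
     mavg ((W0 ^\<^sub>m n) * ((transpose_mat W0) ^\<^sub>m m))
       / (real (dim_row W0)) powi (int n + int m - 1)"

definition compositions :: "nat \<Rightarrow> nat list set" where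
  "compositions n = {c. (\<forall>k\<in>set c. 0 < k) \<and> sum_list c = n}"

definition is_motif_cumulants ::
  "real mat \<Rightarrow> (nat \<Rightarrow> real) \<Rightarrow> (nat \<Rightarrow> nat \<Rightarrow> real) \<Rightarrow> bool" where
  "is_motif_cumulants W0 \<kappa> \<kappa>2 \<longleftrightarrow>
     (\<forall>n\<ge>1. motif_moment W0 n 0 =
        (\<Sum>c\<in>compositions n. prod_list (map \<kappa> c))) \<and>
     (\<forall>n\<ge>1. \<forall>m\<ge>1. motif_moment W0 n m =
        (\<Sum>c\<in>compositions n. \<Sum>d\<in>compositions m.
           prod_list (map \<kappa> (tl c)) *
           (\<kappa>2 (hd c) (hd d) + \<kappa> (hd c) * \<kappa> (hd d)) *
           prod_list (map \<kappa> (tl d))))"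

end

theory Submission
  imports Defs
begin

(*
  Put B = a w W0 and g = N a w. As the spectral radius of B is below 1, both resolvents are
  Neumann series, so N <S_y> / S_x is the double series of N <B^n (B^T)^m> = g^(n+m) mu_{n,m}.
  With P, K, K2, M the generating functions of the composition sums of kappa, of kappa_n, of
  kappa_{n,m} and of mu_{n,m}, the cumulant relations say P = 1 + K P and
  M(x,y) = P(x) P(y) (1 + K2(x,y)). Evaluated at x = y = g, where all series converge absolutely
  and Cauchy products apply, this gives P(g) = 1 / (1 - K(g)) and the claimed formula.
*)

lemma smult_smult_mat: "a \<cdot>\<^sub>m (b \<cdot>\<^sub>m A) = (a * b :: 'a :: semigroup_mult) \<cdot>\<^sub>m A"
  by (intro eq_matI) (auto simp: mult.assoc)

lemma smult_pow_mat:
  fixes A :: "'a :: comm_semiring_1 mat"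
  assumes "A \<in> carrier_mat n n"
  shows "(c \<cdot>\<^sub>m A) ^\<^sub>m k = c ^ k \<cdot>\<^sub>m A ^\<^sub>m k"
proof (induction k)
  case (Suc k)
  then show ?case
    using assms by (simp add: mult_smult_distrib[of _ n n _ n] mult_smult_assoc_mat[of _ n n _ n]
        smult_smult_mat mult.commute)
qed (use assms in \<open>auto intro!: eq_matI\<close>)

lemma transpose_smult_mat: "transpose_mat (c \<cdot>\<^sub>m A) = c \<cdot>\<^sub>m transpose_mat A"
  by (intro eq_matI) auto

lemma pow_mat_commute:
  fixes A :: "'a :: semiring_1 mat"
  assumes "A \<in> carrier_mat n n"
  shows "A * A ^\<^sub>m k = A ^\<^sub>m k * A"
proof (induction k)
  case (Suc k)
  have "A * A ^\<^sub>m Suc k = (A * A ^\<^sub>m k) * A"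
    using assms by (simp add: assoc_mult_mat[of _ n n _ n _ n])
  with Suc show ?case by simp
qed (use assms in simp)

lemma transpose_pow_mat:
  fixes A :: "'a :: comm_semiring_1 mat"
  assumes A: "A \<in> carrier_mat n n"
  shows "transpose_mat (A ^\<^sub>m k) = transpose_mat A ^\<^sub>m k"
proof (induction k)
  case (Suc k)
  have "transpose_mat (A ^\<^sub>m Suc k) = transpose_mat A * transpose_mat (A ^\<^sub>m k)"
    using transpose_mult[OF pow_carrier_mat[OF A] A] by simp
  also have "\<dots> = transpose_mat A ^\<^sub>m Suc k"
    using Suc pow_mat_commute[of "transpose_mat A" n k] A by simp
  finally show ?case .
qed (use A in simp)

lemma eigenvalue_smult_mat:
  fixes A :: "'a :: field mat"
  assumes A: "A \<in> carrier_mat n n" and ev: "eigenvalue A ev"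
  shows "eigenvalue (c \<cdot>\<^sub>m A) (c * ev)"
proof -
  obtain v where v: "v \<in> carrier_vec n" "v \<noteq> 0\<^sub>v n" "A *\<^sub>v v = ev \<cdot>\<^sub>v v"
    using ev A unfolding eigenvalue_def eigenvector_def by auto
  have "(c \<cdot>\<^sub>m A) *\<^sub>v v = c \<cdot>\<^sub>v (A *\<^sub>v v)"
    using A v(1) by (intro eq_vecI) (auto simp: scalar_prod_def sum_distrib_left mult.assoc)
  also have "\<dots> = (c * ev) \<cdot>\<^sub>v v"
    using v(3) by (simp add: smult_smult_assoc)
  finally show ?thesis
    using v A unfolding eigenvalue_def eigenvector_def by auto
qed

lemma spectral_radius_smult_le:
  assumes A: "A \<in> carrier_mat n n" and n: "n > 0" and c: "c \<noteq> 0"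
  shows "spectral_radius (c \<cdot>\<^sub>m A) \<le> norm c * spectral_radius A"
proof -
  have cA: "c \<cdot>\<^sub>m A \<in> carrier_mat n n" using A by simp
  obtain ev where ev: "eigenvalue (c \<cdot>\<^sub>m A) ev" and sr: "spectral_radius (c \<cdot>\<^sub>m A) = norm ev"
    using spectral_radius_mem_max(1)[OF cA n] unfolding spectrum_def by auto
  have "inverse c \<cdot>\<^sub>m (c \<cdot>\<^sub>m A) = A"
    using c A by (auto simp: smult_smult_mat intro!: eq_matI)
  then have "eigenvalue A (inverse c * ev)"
    using eigenvalue_smult_mat[OF cA ev, of "inverse c"] by simp
  then have "norm (inverse c * ev) \<le> spectral_radius A"
    using spectral_radius_mem_max(2)[OF A n] unfolding spectrum_def by auto
  moreover have "norm ev = norm c * norm (inverse c * ev)"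
    using c by (simp add: norm_mult norm_inverse)
  ultimately show ?thesis
    by (metis sr mult_left_mono norm_ge_zero)
qed

text \<open>Rescaling by a rate r strictly between the spectral radius and 1 keeps the spectral radius
  below 1, so the rescaled powers stay bounded and the entries of the powers are O(r^k).\<close>

lemma summable_abs_pow_mat_entry:
  fixes A :: "real mat"
  assumes A: "A \<in> carrier_mat n n" and sr: "spectral_radius (map_mat complex_of_real A) < 1"
    and ij: "i < n" "j < n"
  shows "summable (\<lambda>k. \<bar>(A ^\<^sub>m k) $$ (i, j)\<bar>)"
proof -
  define Ac where "Ac = map_mat complex_of_real A"
  have Ac: "Ac \<in> carrier_mat n n" using A by (simp add: Ac_def)
  have n: "n > 0" using ij by simp
  define s where "s = spectral_radius Ac"
  have s: "0 \<le> s" "s < 1"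
    using spectral_radius_mem_max(1)[OF Ac n] sr by (auto simp: s_def Ac_def)
  define r where "r = (s + 1) / 2"
  have r: "0 < r" "r < 1" "s < r" using s by (auto simp: r_def)
  have "spectral_radius (complex_of_real (1 / r) \<cdot>\<^sub>m Ac) \<le> s / r"
    using spectral_radius_smult_le[OF Ac n, of "complex_of_real (1 / r)"] r
    by (simp add: s_def norm_inverse divide_inverse mult.commute)
  also have "\<dots> < 1" using r by simp
  finally obtain c where c: "\<And>k. norm_bound ((complex_of_real (1 / r) \<cdot>\<^sub>m Ac) ^\<^sub>m k) c"
    using spectral_radius_jnf_norm_bound_less_1_upper_triangular[of _ n] Ac by (meson smult_carrier_mat)
  have bound: "\<bar>(A ^\<^sub>m k) $$ (i, j)\<bar> \<le> c * r ^ k" for k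
  proof -
    have "(complex_of_real (1 / r) \<cdot>\<^sub>m Ac) ^\<^sub>m k
        = complex_of_real ((1 / r) ^ k) \<cdot>\<^sub>m map_mat complex_of_real (A ^\<^sub>m k)"
      unfolding smult_pow_mat[OF Ac] by (simp add: Ac_def of_real_hom.mat_hom_pow[OF A, symmetric])
    then have "norm (complex_of_real ((1 / r) ^ k * (A ^\<^sub>m k) $$ (i, j))) \<le> c"
      using c[of k] ij A unfolding norm_bound_def by auto
    then have "\<bar>(1 / r) ^ k * (A ^\<^sub>m k) $$ (i, j)\<bar> \<le> c"
      by (metis norm_of_real)
    then show ?thesis
      using r by (simp add: abs_mult field_simps)
  qed
  have "summable (\<lambda>k. c * r ^ k)"
    using r by (intro summable_mult summable_geometric) simp
  then show ?thesis
    by (rule summable_comparison_test') (simp add: bound)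
qed

lemma minv_eqI:
  fixes A S :: "real mat"
  assumes A: "A \<in> carrier_mat n n" and S: "S \<in> carrier_mat n n" and SA: "S * A = 1\<^sub>m n"
  shows "minv A = S"
proof -
  have AS: "A * S = 1\<^sub>m n" by (rule mat_mult_left_right_inverse[OF S A SA])
  then have "A \<in> Units (ring_mat TYPE(real) n undefined)"
    using A S SA unfolding Units_def ring_mat_def by auto
  then obtain B where B: "mat_inverse A = Some B"
    using mat_inverse(1)[OF A] by fastforce
  then have BA: "B * A = 1\<^sub>m n" and Bc: "B \<in> carrier_mat n n"
    using mat_inverse(2)[OF A] by auto
  have "B = (B * A) * S"
    using Bc A S AS by (simp add: assoc_mult_mat[OF Bc A S])
  also have "\<dots> = S" using BA S by simp
  finally show ?thesis unfolding minv_def B by simp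
qed

lemma minv_one_minus_eq_suminf:
  fixes A :: "real mat"
  assumes A: "A \<in> carrier_mat n n"
    and summable: "\<And>i j. i < n \<Longrightarrow> j < n \<Longrightarrow> summable (\<lambda>k. (A ^\<^sub>m k) $$ (i, j))"
  shows "minv (1\<^sub>m n - A) = mat n n (\<lambda>(i, j). \<Sum>k. (A ^\<^sub>m k) $$ (i, j))"
proof (rule minv_eqI)
  define S where "S = mat n n (\<lambda>(i, j). \<Sum>k. (A ^\<^sub>m k) $$ (i, j))"
  have Sc: "S \<in> carrier_mat n n" by (simp add: S_def)
  show "S * (1\<^sub>m n - A) = 1\<^sub>m n"
  proof (rule eq_matI)
    fix i j assume "i < dim_row (1\<^sub>m n)" "j < dim_col (1\<^sub>m n)"
    then have i: "i < n" and j: "j < n" by auto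
    have "(S * (1\<^sub>m n - A)) $$ (i, j) = S $$ (i, j) - (S * A) $$ (i, j)"
      using A Sc i j by (simp add: mult_minus_distrib_mat[OF Sc one_carrier_mat A])
    also have "(S * A) $$ (i, j) = (\<Sum>l<n. (\<Sum>k. (A ^\<^sub>m k) $$ (i, l)) * A $$ (l, j))"
      using A i j by (simp add: S_def scalar_prod_def lessThan_atLeast0)
    also have "\<dots> = (\<Sum>k. \<Sum>l<n. (A ^\<^sub>m k) $$ (i, l) * A $$ (l, j))"
      using i by (subst suminf_sum) (auto simp: suminf_mult2 summable intro!: summable_mult2)
    also have "\<dots> = (\<Sum>k. (A ^\<^sub>m Suc k) $$ (i, j))"
      using A i j by (simp add: scalar_prod_def lessThan_atLeast0)
    also have "\<dots> = (\<Sum>k. (A ^\<^sub>m k) $$ (i, j)) - (A ^\<^sub>m 0) $$ (i, j)"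
      by (rule suminf_split_head[OF summable[OF i j]])
    finally show "(S * (1\<^sub>m n - A)) $$ (i, j) = 1\<^sub>m n $$ (i, j)"
      using i j A by (simp add: S_def)
  qed (use A Sc in auto)
qed (use A in auto)

lemma mavg_smult: "mavg (c \<cdot>\<^sub>m X) = c * mavg X"
  unfolding mavg_def by (simp add: sum_distrib_left mult_ac)

lemma mavg_one: "mavg (1\<^sub>m n) = 1 / real n"
  unfolding mavg_def by (simp add: power2_eq_square)

lemma mavg_transpose:
  assumes "X \<in> carrier_mat n n"
  shows "mavg (transpose_mat X) = mavg X"
  using assms unfolding mavg_def by (simp add: sum.swap[of "\<lambda>i j. X $$ (j, i)"])

lemma summable_abs_mavg:
  fixes F :: "nat \<Rightarrow> real mat"
  assumes F: "\<And>k. F k \<in> carrier_mat n n"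
    and summable: "\<And>i j. i < n \<Longrightarrow> j < n \<Longrightarrow> summable (\<lambda>k. \<bar>F k $$ (i, j)\<bar>)"
  shows "summable (\<lambda>k. \<bar>mavg (F k)\<bar>)"
proof (rule summable_comparison_test')
  show "summable (\<lambda>k. 1 / (real n)\<^sup>2 * (\<Sum>i<n. \<Sum>j<n. \<bar>F k $$ (i, j)\<bar>))"
    by (intro summable_mult summable_sum summable) auto
  show "norm \<bar>mavg (F k)\<bar> \<le> 1 / (real n)\<^sup>2 * (\<Sum>i<n. \<Sum>j<n. \<bar>F k $$ (i, j)\<bar>)" for k
  proof -
    have "\<bar>\<Sum>i<n. \<Sum>j<n. F k $$ (i, j)\<bar> \<le> (\<Sum>i<n. \<Sum>j<n. \<bar>F k $$ (i, j)\<bar>)"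
      by (rule order.trans[OF sum_abs]) (intro sum_mono sum_abs)
    then show ?thesis
      using F[of k] unfolding mavg_def by (simp add: abs_mult divide_right_mono)
  qed
qed

lemma mavg_mult_sums:
  fixes F G :: "nat \<Rightarrow> real mat"
  assumes F: "\<And>k. F k \<in> carrier_mat n n" and G: "\<And>k. G k \<in> carrier_mat n n"
    and sF: "\<And>i j. i < n \<Longrightarrow> j < n \<Longrightarrow> summable (\<lambda>k. F k $$ (i, j))"
    and sG: "\<And>i j. i < n \<Longrightarrow> j < n \<Longrightarrow> summable (\<lambda>k. G k $$ (i, j))"
  defines "SF \<equiv> mat n n (\<lambda>(i, j). \<Sum>k. F k $$ (i, j))"
    and "SG \<equiv> mat n n (\<lambda>(i, j). \<Sum>k. G k $$ (i, j))"
  shows "(\<lambda>k. mavg (F k * SG)) sums mavg (SF * SG)"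
    and "\<And>k. (\<lambda>l. mavg (F k * G l)) sums mavg (F k * SG)"
proof -
  have mavg_prod:
    "mavg (X * Y) = 1 / (real n)\<^sup>2 * (\<Sum>i<n. \<Sum>j<n. \<Sum>l<n. X $$ (i, l) * Y $$ (l, j))"
    if "X \<in> carrier_mat n n" "Y \<in> carrier_mat n n" for X Y
  proof -
    have "mavg (X * Y) = 1 / (real n)\<^sup>2 * (\<Sum>i<n. \<Sum>j<n. (X * Y) $$ (i, j))"
      using that by (simp add: mavg_def)
    also have "\<dots> = 1 / (real n)\<^sup>2 * (\<Sum>i<n. \<Sum>j<n. \<Sum>l<n. X $$ (i, l) * Y $$ (l, j))"
      using that by (intro arg_cong[where f = "\<lambda>s. _ * s"] sum.cong refl)
        (simp add: scalar_prod_def lessThan_atLeast0)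
    finally show ?thesis .
  qed
  have SF: "SF \<in> carrier_mat n n" and SG: "SG \<in> carrier_mat n n"
    by (simp_all add: SF_def SG_def)
  show "(\<lambda>k. mavg (F k * SG)) sums mavg (SF * SG)"
    unfolding mavg_prod[OF F SG] mavg_prod[OF SF SG]
    by (intro sums_mult sums_sum sums_mult2) (auto simp: SF_def intro!: summable_sums sF)
  show "(\<lambda>l. mavg (F k * G l)) sums mavg (F k * SG)" for k
    unfolding mavg_prod[OF F G] mavg_prod[OF F SG]
    by (intro sums_mult sums_sum sums_mult) (auto simp: SG_def intro!: summable_sums sG)
qed

lemma mavg_pow_mult_transpose_pow_sums:
  fixes A :: "real mat"
  assumes A: "A \<in> carrier_mat n n" and sr: "spectral_radius (map_mat complex_of_real A) < 1"
  shows "summable (\<lambda>k. \<bar>mavg (A ^\<^sub>m k)\<bar>)"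
    and "\<exists>R. (\<forall>k. (\<lambda>l. mavg (A ^\<^sub>m k * transpose_mat A ^\<^sub>m l)) sums R k) \<and>
             R sums mavg (minv (1\<^sub>m n - A) * minv (1\<^sub>m n - transpose_mat A))"
proof -
  have AT: "transpose_mat A \<in> carrier_mat n n" using A by simp
  have abs_A: "summable (\<lambda>k. \<bar>(A ^\<^sub>m k) $$ (i, j)\<bar>)" if "i < n" "j < n" for i j
    using summable_abs_pow_mat_entry[OF A sr that] .
  have abs_AT: "summable (\<lambda>k. \<bar>(transpose_mat A ^\<^sub>m k) $$ (i, j)\<bar>)" if "i < n" "j < n" for i j
    using abs_A[OF that(2,1)] that A by (simp add: transpose_pow_mat[OF A, symmetric])
  show "summable (\<lambda>k. \<bar>mavg (A ^\<^sub>m k)\<bar>)"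
    using A abs_A by (intro summable_abs_mavg) auto
  have sA: "summable (\<lambda>k. (A ^\<^sub>m k) $$ (i, j))" if "i < n" "j < n" for i j
    using abs_A[OF that] by (rule summable_rabs_cancel)
  have sAT: "summable (\<lambda>k. (transpose_mat A ^\<^sub>m k) $$ (i, j))" if "i < n" "j < n" for i j
    using abs_AT[OF that] by (rule summable_rabs_cancel)
  show "\<exists>R. (\<forall>k. (\<lambda>l. mavg (A ^\<^sub>m k * transpose_mat A ^\<^sub>m l)) sums R k) \<and>
             R sums mavg (minv (1\<^sub>m n - A) * minv (1\<^sub>m n - transpose_mat A))"
  proof (intro exI conjI allI)
    have "minv (1\<^sub>m n - A) = mat n n (\<lambda>(i, j). \<Sum>k. (A ^\<^sub>m k) $$ (i, j))"
      by (intro minv_one_minus_eq_suminf A sA)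
    moreover have "minv (1\<^sub>m n - transpose_mat A)
        = mat n n (\<lambda>(i, j). \<Sum>k. (transpose_mat A ^\<^sub>m k) $$ (i, j))"
      by (intro minv_one_minus_eq_suminf AT sAT)
    ultimately show "(\<lambda>k. mavg (A ^\<^sub>m k * minv (1\<^sub>m n - transpose_mat A)))
        sums mavg (minv (1\<^sub>m n - A) * minv (1\<^sub>m n - transpose_mat A))"
      and "(\<lambda>l. mavg (A ^\<^sub>m k * transpose_mat A ^\<^sub>m l))
        sums mavg (A ^\<^sub>m k * minv (1\<^sub>m n - transpose_mat A))" for k
      using A by (auto intro!: mavg_mult_sums sA sAT)
  qed
qed

lemma motif_moment_scaled:
  fixes W0 :: "real mat"
  assumes W0: "W0 \<in> carrier_mat N N" and N: "N > 0"
  shows "(real N * c) ^ (n + m) * motif_moment W0 n m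
       = real N * mavg ((c \<cdot>\<^sub>m W0) ^\<^sub>m n * transpose_mat (c \<cdot>\<^sub>m W0) ^\<^sub>m m)"
proof -
  have WT: "transpose_mat W0 \<in> carrier_mat N N" using W0 by simp
  have "(c \<cdot>\<^sub>m W0) ^\<^sub>m n * transpose_mat (c \<cdot>\<^sub>m W0) ^\<^sub>m m
      = c ^ (n + m) \<cdot>\<^sub>m (W0 ^\<^sub>m n * transpose_mat W0 ^\<^sub>m m)"
    using W0 WT
    by (simp add: transpose_smult_mat smult_pow_mat mult_smult_assoc_mat[of _ N N _ N] mult_smult_distrib[of _ N N _ N]
        smult_smult_mat power_add mult.commute)
  moreover have "real N ^ (n + m) / real N powi (int n + int m - 1) = real N"
    using N by (simp add: power_int_diff power_int_add power_add)
  moreover have "(real N * c) ^ (n + m) * motif_moment W0 n m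
      = c ^ (n + m) * mavg (W0 ^\<^sub>m n * transpose_mat W0 ^\<^sub>m m)
        * (real N ^ (n + m) / real N powi (int n + int m - 1))"
    using W0 unfolding motif_moment_def by (simp add: power_mult_distrib)
  ultimately show ?thesis
    by (simp add: mavg_smult)
qed

lemma motif_moment_0_0:
  fixes W0 :: "real mat"
  assumes "W0 \<in> carrier_mat N N" and "N > 0"
  shows "motif_moment W0 0 0 = 1"
  using assms unfolding motif_moment_def by (simp add: mavg_one power_int_minus)

lemma motif_moment_0_left:
  fixes W0 :: "real mat"
  assumes W0: "W0 \<in> carrier_mat N N"
  shows "motif_moment W0 0 m = motif_moment W0 m 0"
proof -
  have "mavg (transpose_mat W0 ^\<^sub>m m) = mavg (W0 ^\<^sub>m m)"
    using mavg_transpose[OF pow_carrier_mat[OF W0]] by (simp add: transpose_pow_mat[OF W0])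
  then show ?thesis
    using W0 unfolding motif_moment_def by simp
qed

lemma motif_moment_double_sums_resolvents:
  fixes W0 :: "real mat"
  assumes W0: "W0 \<in> carrier_mat N N" and N: "N > 0"
    and rho: "spectral_radius (map_mat complex_of_real (c \<cdot>\<^sub>m W0)) < 1"
  shows "summable (\<lambda>n. \<bar>(real N * c) ^ n * motif_moment W0 n 0\<bar>)"
    and "\<exists>R. (\<forall>n. (\<lambda>m. (real N * c) ^ (n + m) * motif_moment W0 n m) sums R n) \<and>
           R sums (real N * mavg (minv (1\<^sub>m N - c \<cdot>\<^sub>m W0) * minv (1\<^sub>m N - c \<cdot>\<^sub>m transpose_mat W0)))"
proof -
  define A where "A = c \<cdot>\<^sub>m W0"
  have A: "A \<in> carrier_mat N N" using W0 by (simp add: A_def)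
  have scaled: "(real N * c) ^ (n + m) * motif_moment W0 n m
      = real N * mavg (A ^\<^sub>m n * transpose_mat A ^\<^sub>m m)" for n m
    unfolding A_def by (rule motif_moment_scaled[OF W0 N])
  note sums = mavg_pow_mult_transpose_pow_sums[OF A rho[folded A_def]]
  show "summable (\<lambda>n. \<bar>(real N * c) ^ n * motif_moment W0 n 0\<bar>)"
    using summable_mult[OF sums(1), of "real N"] scaled[of _ 0] A by (simp add: abs_mult)
  obtain R where "\<forall>n. (\<lambda>m. mavg (A ^\<^sub>m n * transpose_mat A ^\<^sub>m m)) sums R n"
    and "R sums mavg (minv (1\<^sub>m N - A) * minv (1\<^sub>m N - transpose_mat A))"
    using sums(2) by blast
  then show "\<exists>R. (\<forall>n. (\<lambda>m. (real N * c) ^ (n + m) * motif_moment W0 n m) sums R n) \<and>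
           R sums (real N * mavg (minv (1\<^sub>m N - c \<cdot>\<^sub>m W0) * minv (1\<^sub>m N - c \<cdot>\<^sub>m transpose_mat W0)))"
    unfolding scaled transpose_smult_mat[symmetric] A_def[symmetric] by (intro exI[of _ "\<lambda>n. real N * R n"]) (simp add: sums_mult)
qed

lemma compositions_0: "compositions 0 = {[]}"
  by (auto simp: compositions_def) (metis list.exhaust list.set_intros(1) less_irrefl)

lemma finite_compositions: "finite (compositions n)"
proof (rule finite_subset)
  have "length c \<le> sum_list c" if "\<forall>k\<in>set c. 0 < k" for c :: "nat list"
    using that by (induction c) auto
  then show "compositions n \<subseteq> {c. set c \<subseteq> {0..n} \<and> length c \<le> n}"
    by (fastforce simp: compositions_def intro: member_le_sum_list)
  show "finite {c. set c \<subseteq> {0..n} \<and> length c \<le> n}"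
    by (rule finite_lists_length_le) auto
qed

lemma sum_compositions_Cons:
  assumes "n \<ge> 1"
  shows "(\<Sum>c\<in>compositions n. F c) = (\<Sum>i\<in>{1..n}. \<Sum>c\<in>compositions (n - i). F (i # c))"
proof -
  have "(\<Sum>c\<in>compositions n. F c) = (\<Sum>(i, c)\<in>Sigma {1..n} (\<lambda>i. compositions (n - i)). F (i # c))"
  proof (rule sum.reindex_bij_witness[of _ "\<lambda>(i, c). i # c" "\<lambda>c. (hd c, tl c)"])
    fix c assume c: "c \<in> compositions n"
    with assms obtain i c' where "c = i # c'"
      by (cases c) (auto simp: compositions_def)
    with c show "(case (hd c, tl c) of (i, c) \<Rightarrow> i # c) = c"
      and "(hd c, tl c) \<in> Sigma {1..n} (\<lambda>i. compositions (n - i))"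
      and "(case (hd c, tl c) of (i, c) \<Rightarrow> F (i # c)) = F c"
      by (auto simp: compositions_def)
  qed (auto simp: compositions_def)
  also have "\<dots> = (\<Sum>i\<in>{1..n}. \<Sum>c\<in>compositions (n - i). F (i # c))"
    by (rule sum.Sigma[symmetric]) (auto simp: finite_compositions)
  finally show ?thesis .
qed

definition composition_sum :: "(nat \<Rightarrow> real) \<Rightarrow> nat \<Rightarrow> real" where
  "composition_sum \<kappa> n = (\<Sum>c\<in>compositions n. prod_list (map \<kappa> c))"

lemma composition_sum_0 [simp]: "composition_sum \<kappa> 0 = 1"
  by (simp add: composition_sum_def compositions_0)

lemma composition_sum_rec:
  "n \<ge> 1 \<Longrightarrow> composition_sum \<kappa> n = (\<Sum>i\<in>{1..n}. \<kappa> i * composition_sum \<kappa> (n - i))"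
  unfolding composition_sum_def by (subst sum_compositions_Cons) (auto simp: sum_distrib_left)

lemma sum_compositions_pair:
  assumes "n \<ge> 1" "m \<ge> 1"
  shows "(\<Sum>c\<in>compositions n. \<Sum>d\<in>compositions m.
           prod_list (map \<kappa> (tl c)) * H (hd c) (hd d) * prod_list (map \<kappa> (tl d)))
       = (\<Sum>i\<in>{1..n}. \<Sum>j\<in>{1..m}.
           composition_sum \<kappa> (n - i) * H i j * composition_sum \<kappa> (m - j))"
proof -
  have "(\<Sum>c\<in>compositions n. \<Sum>d\<in>compositions m.
           prod_list (map \<kappa> (tl c)) * H (hd c) (hd d) * prod_list (map \<kappa> (tl d)))
      = (\<Sum>i\<in>{1..n}. \<Sum>c\<in>compositions (n - i). \<Sum>j\<in>{1..m}. \<Sum>d\<in>compositions (m - j).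
           prod_list (map \<kappa> c) * H i j * prod_list (map \<kappa> d))"
    using assms by (simp add: sum_compositions_Cons)
  also have "\<dots> = (\<Sum>i\<in>{1..n}. \<Sum>j\<in>{1..m}.
           composition_sum \<kappa> (n - i) * H i j * composition_sum \<kappa> (m - j))"
  proof (intro sum.cong refl)
    fix i
    have "(\<Sum>c\<in>compositions (n - i). \<Sum>j\<in>{1..m}. \<Sum>d\<in>compositions (m - j).
           prod_list (map \<kappa> c) * H i j * prod_list (map \<kappa> d))
        = (\<Sum>j\<in>{1..m}. \<Sum>c\<in>compositions (n - i).
           prod_list (map \<kappa> c) * (H i j * composition_sum \<kappa> (m - j)))"
      by (subst sum.swap) (simp add: composition_sum_def sum_distrib_left mult.assoc)
    then show "(\<Sum>c\<in>compositions (n - i). \<Sum>j\<in>{1..m}. \<Sum>d\<in>compositions (m - j).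
           prod_list (map \<kappa> c) * H i j * prod_list (map \<kappa> d))
        = (\<Sum>j\<in>{1..m}. composition_sum \<kappa> (n - i) * H i j * composition_sum \<kappa> (m - j))"
      by (simp add: composition_sum_def sum_distrib_right[symmetric] mult.assoc)
  qed
  finally show ?thesis .
qed

lemma motif_moment_cumulant_expansion:
  fixes W0 :: "real mat"
  assumes W0: "W0 \<in> carrier_mat N N" and N: "N > 0" and cum: "is_motif_cumulants W0 \<kappa> \<kappa>2"
  shows "motif_moment W0 n m = composition_sum \<kappa> n * composition_sum \<kappa> m
           + (\<Sum>i\<in>{1..n}. \<Sum>j\<in>{1..m}.
                composition_sum \<kappa> (n - i) * \<kappa>2 i j * composition_sum \<kappa> (m - j))"
proof -
  have moment_0: "motif_moment W0 n 0 = composition_sum \<kappa> n" for n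
    using cum motif_moment_0_0[OF W0 N]
    by (cases "n = 0") (auto simp: is_motif_cumulants_def composition_sum_def compositions_0)
  consider "n = 0" | "m = 0" | "n \<ge> 1" "m \<ge> 1" by linarith
  then show ?thesis
  proof cases
    case 1
    then show ?thesis using moment_0 motif_moment_0_left[OF W0] by simp
  next
    case 2
    then show ?thesis using moment_0 by simp
  next
    case 3
    then have "motif_moment W0 n m = (\<Sum>i\<in>{1..n}. \<Sum>j\<in>{1..m}.
        composition_sum \<kappa> (n - i) * (\<kappa>2 i j + \<kappa> i * \<kappa> j) * composition_sum \<kappa> (m - j))"
      using cum sum_compositions_pair[of n m \<kappa> "\<lambda>i j. \<kappa>2 i j + \<kappa> i * \<kappa> j"]
      by (simp add: is_motif_cumulants_def)
    also have "\<dots> = (\<Sum>i\<in>{1..n}. \<Sum>j\<in>{1..m}.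
             composition_sum \<kappa> (n - i) * \<kappa>2 i j * composition_sum \<kappa> (m - j))
        + (\<Sum>i\<in>{1..n}. \<Sum>j\<in>{1..m}.
             (\<kappa> i * composition_sum \<kappa> (n - i)) * (\<kappa> j * composition_sum \<kappa> (m - j)))"
      by (simp add: sum.distrib distrib_left distrib_right mult_ac)
    also have "(\<Sum>i\<in>{1..n}. \<Sum>j\<in>{1..m}.
             (\<kappa> i * composition_sum \<kappa> (n - i)) * (\<kappa> j * composition_sum \<kappa> (m - j)))
        = (\<Sum>i\<in>{1..n}. \<kappa> i * composition_sum \<kappa> (n - i))
          * (\<Sum>j\<in>{1..m}. \<kappa> j * composition_sum \<kappa> (m - j))"
      by (rule sum_product[symmetric])
    finally show ?thesis
      using 3 by (simp add: composition_sum_rec add.commute)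
  qed
qed

lemma infsum_nat_eq_suminf:
  fixes f :: "nat \<Rightarrow> 'a :: {topological_comm_monoid_add, t2_space}"
  assumes "f summable_on UNIV"
  shows "infsum f UNIV = suminf f"
  using has_sum_imp_sums[OF has_sum_infsum[OF assms]] by (simp add: sums_iff)

lemma abs_summable_on_atLeast_1_suminf:
  fixes f :: "nat \<Rightarrow> real"
  assumes "(\<lambda>n. \<bar>f n\<bar>) summable_on {1..}"
  shows "summable (\<lambda>n. \<bar>if n = 0 then 0 else f n\<bar>)"
    and "(\<Sum>\<^sub>\<infinity>n\<in>{1..}. f n) = (\<Sum>n. if n = 0 then 0 else f n)"
proof -
  let ?f0 = "\<lambda>n. if n = 0 then 0 else f n"
  have "(\<lambda>n. \<bar>?f0 n\<bar>) summable_on UNIV"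
    using assms by (subst summable_on_cong_neutral[where T = "{1..}" and g = "\<lambda>n. \<bar>f n\<bar>"]) auto
  then show "summable (\<lambda>n. \<bar>?f0 n\<bar>)"
    by (simp add: summable_on_UNIV_nonneg_real_iff)
  have "?f0 summable_on UNIV"
    by (rule abs_summable_summable) (use \<open>(\<lambda>n. \<bar>?f0 n\<bar>) summable_on UNIV\<close> in simp)
  moreover have "(\<Sum>\<^sub>\<infinity>n\<in>{1..}. f n) = (\<Sum>\<^sub>\<infinity>n. ?f0 n)"
    by (rule infsum_cong_neutral) auto
  ultimately show "(\<Sum>\<^sub>\<infinity>n\<in>{1..}. f n) = (\<Sum>n. ?f0 n)"
    by (simp add: infsum_nat_eq_suminf)
qed

lemma abs_summable_on_atLeast_1_Times_suminf:
  fixes f :: "nat \<Rightarrow> nat \<Rightarrow> real"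
  assumes "(\<lambda>(n, m). \<bar>f n m\<bar>) summable_on {1..} \<times> {1..}"
  defines "f0 \<equiv> \<lambda>n m. if n = 0 \<or> m = 0 then 0 else f n m"
  shows "summable (\<lambda>m. \<bar>f0 n m\<bar>)"
    and "summable (\<lambda>n. \<Sum>m. \<bar>f0 n m\<bar>)"
    and "(\<Sum>\<^sub>\<infinity>(n, m)\<in>{1..} \<times> {1..}. f n m) = (\<Sum>n. \<Sum>m. f0 n m)"
proof -
  have abs: "(\<lambda>(n, m). \<bar>f0 n m\<bar>) summable_on UNIV \<times> UNIV"
    using assms(1)
    by (subst summable_on_cong_neutral[where T = "{1..} \<times> {1..}"]) (auto simp: f0_def split: if_splits)
  have row_on: "(\<lambda>m. \<bar>f0 n m\<bar>) summable_on UNIV" for n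
    using summable_on_SigmaD1[OF abs, of n] by simp
  show "summable (\<lambda>m. \<bar>f0 n m\<bar>)" for n
    by (rule summable_on_imp_summable[OF row_on])
  have "(\<lambda>n. \<Sum>\<^sub>\<infinity>m. \<bar>f0 n m\<bar>) summable_on UNIV"
    using summable_on_Sigma_banach[OF abs] by simp
  then show "summable (\<lambda>n. \<Sum>m. \<bar>f0 n m\<bar>)"
    by (simp only: infsum_nat_eq_suminf[OF row_on] summable_on_imp_summable)
  have f0: "(\<lambda>(n, m). f0 n m) summable_on UNIV \<times> UNIV"
    by (rule abs_summable_summable) (use abs in \<open>simp add: case_prod_unfold\<close>)
  have row_f0: "(\<Sum>\<^sub>\<infinity>m. f0 n m) = (\<Sum>m. f0 n m)" for n
    using summable_on_SigmaD1[OF f0, of n] by (intro infsum_nat_eq_suminf) simp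
  have "(\<Sum>\<^sub>\<infinity>(n, m)\<in>{1..} \<times> {1..}. f n m) = (\<Sum>\<^sub>\<infinity>(n, m)\<in>UNIV \<times> UNIV. f0 n m)"
    by (rule infsum_cong_neutral) (auto simp: f0_def split: if_splits)
  also have "\<dots> = (\<Sum>\<^sub>\<infinity>n. \<Sum>m. f0 n m)"
    by (simp only: infsum_Sigma'_banach[OF f0, symmetric] row_f0)
  also have "\<dots> = (\<Sum>n. \<Sum>m. f0 n m)"
    using summable_on_Sigma_banach[OF f0] by (intro infsum_nat_eq_suminf) (simp only: row_f0)
  finally show "(\<Sum>\<^sub>\<infinity>(n, m)\<in>{1..} \<times> {1..}. f n m) = (\<Sum>n. \<Sum>m. f0 n m)" .
qed

lemma renewal_sums:
  fixes p k :: "nat \<Rightarrow> real"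
  assumes p: "summable (\<lambda>n. \<bar>p n\<bar>)" and k: "summable (\<lambda>n. \<bar>k n\<bar>)"
    and k0: "k 0 = 0" and p0: "p 0 = 1"
    and rec: "\<And>n. n \<ge> 1 \<Longrightarrow> p n = (\<Sum>i\<le>n. k i * p (n - i))"
    and K: "suminf k \<noteq> 1"
  shows "p sums (1 / (1 - suminf k))"
proof -
  have "(\<lambda>n. (\<Sum>i\<le>n. k i * p (n - i)) + (if n = 0 then 1 else 0)) sums (suminf k * suminf p + 1)"
    using k p by (intro sums_add Cauchy_product_sums sums_single) simp_all
  moreover have "(\<lambda>n. (\<Sum>i\<le>n. k i * p (n - i)) + (if n = 0 then 1 else 0)) = p"
  proof
    show "(\<Sum>i\<le>n. k i * p (n - i)) + (if n = 0 then 1 else 0) = p n" for n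
      using rec[of n] k0 p0 by (cases "n = 0") auto
  qed
  ultimately have "suminf p = suminf k * suminf p + 1"
    by (simp add: sums_iff)
  then have "suminf p = 1 / (1 - suminf k)"
    using K by (simp add: field_simps)
  then show ?thesis
    using summable_sums[OF summable_rabs_cancel[OF p]] by simp
qed

lemma renewal_double_sums:
  fixes p k :: "nat \<Rightarrow> real" and q f :: "nat \<Rightarrow> nat \<Rightarrow> real"
  assumes p: "summable (\<lambda>n. \<bar>p n\<bar>)" and k: "summable (\<lambda>n. \<bar>k n\<bar>)"
    and k0: "k 0 = 0" and p0: "p 0 = 1"
    and rec: "\<And>n. n \<ge> 1 \<Longrightarrow> p n = (\<Sum>i\<le>n. k i * p (n - i))"
    and K: "1 - suminf k \<noteq> 0"
    and q: "\<And>i. summable (\<lambda>j. \<bar>q i j\<bar>)" and qq: "summable (\<lambda>i. \<Sum>j. \<bar>q i j\<bar>)"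
    and f: "\<And>n m. f n m = p n * p m + (\<Sum>i\<le>n. p (n - i) * (\<Sum>j\<le>m. q i j * p (m - j)))"
  shows "\<exists>R. (\<forall>n. f n sums R n) \<and> R sums ((1 - suminf k) powi -2 * (1 + (\<Sum>i. \<Sum>j. q i j)))"
proof -
  define M where "M = 1 / (1 - suminf k)"
  define Q where "Q i = (\<Sum>j. q i j)" for i
  have pM: "p sums M"
    unfolding M_def using K by (intro renewal_sums p k k0 p0 rec) simp_all
  have p_norm: "summable (\<lambda>n. norm (p n))" using p by simp
  have Q_norm: "summable (\<lambda>i. norm (Q i))"
    by (rule summable_comparison_test'[OF qq]) (auto simp: Q_def intro: summable_rabs q)
  have qpM: "(\<lambda>m. \<Sum>j\<le>m. q i j * p (m - j)) sums (Q i * M)" for i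
    using Cauchy_product_sums[of "q i" p] q[of i] p_norm pM by (simp add: Q_def sums_iff)
  define R where "R n = p n * M + (\<Sum>i\<le>n. p (n - i) * (Q i * M))" for n
  have fR: "f n sums R n" for n
    unfolding f R_def by (intro sums_add sums_sum sums_mult qpM pM sums_mult2)
  have RS: "R sums (M * M + suminf Q * M * M)"
  proof -
    have "(\<lambda>n. p n * M + (\<Sum>i\<le>n. Q i * p (n - i)) * M) sums (M * M + suminf Q * M * M)"
      using Cauchy_product_sums[OF Q_norm p_norm] pM
      by (intro sums_add sums_mult2) (simp_all add: sums_iff)
    moreover have "(\<lambda>n. p n * M + (\<Sum>i\<le>n. Q i * p (n - i)) * M) = R"
      by (simp add: R_def fun_eq_iff sum_distrib_left sum_distrib_right mult_ac)
    ultimately show ?thesis by simp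
  qed
  have "M * M = (1 - suminf k) powi -2"
    by (simp add: M_def power_int_minus power2_eq_square inverse_eq_divide)
  then have "M * M + suminf Q * M * M = (1 - suminf k) powi -2 * (1 + suminf Q)"
    by (simp add: algebra_simps)
  then show ?thesis
    using fR RS unfolding Q_def by (intro exI[of _ R]) simp
qed

lemma composition_sum_power_weighted:
  "composition_sum (\<lambda>i. g ^ i * \<kappa> i) n = g ^ n * composition_sum \<kappa> n"
proof -
  have "prod_list (map (\<lambda>i. g ^ i * \<kappa> i) c) = g ^ sum_list c * prod_list (map \<kappa> c)" for c
    by (induction c) (simp_all add: power_add mult_ac)
  then show ?thesis
    unfolding composition_sum_def sum_distrib_left
    by (intro sum.cong refl) (simp add: compositions_def)
qed

lemma cumulant_expansion_power_weighted:
  fixes \<mu> \<kappa>2 :: "nat \<Rightarrow> nat \<Rightarrow> real"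
  assumes "\<mu> n m = composition_sum \<kappa> n * composition_sum \<kappa> m
      + (\<Sum>i\<in>{1..n}. \<Sum>j\<in>{1..m}. composition_sum \<kappa> (n - i) * \<kappa>2 i j * composition_sum \<kappa> (m - j))"
  shows "g ^ (n + m) * \<mu> n m
      = composition_sum (\<lambda>i. g ^ i * \<kappa> i) n * composition_sum (\<lambda>i. g ^ i * \<kappa> i) m
      + (\<Sum>i\<in>{1..n}. \<Sum>j\<in>{1..m}. composition_sum (\<lambda>i. g ^ i * \<kappa> i) (n - i)
           * (g ^ (i + j) * \<kappa>2 i j) * composition_sum (\<lambda>i. g ^ i * \<kappa> i) (m - j))"
proof -
  have "g ^ (n + m) = g ^ (n - i) * g ^ (i + j) * g ^ (m - j)" if "i \<le> n" "j \<le> m" for i j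
    using that by (simp flip: power_add)
  then show ?thesis
    unfolding assms composition_sum_power_weighted distrib_left sum_distrib_left
    by (intro arg_cong2[where f = "(+)"] sum.cong refl) (simp_all add: power_add mult_ac)
qed

lemma cumulant_expansion_double_sums:
  fixes \<mu> \<kappa>2 :: "nat \<Rightarrow> nat \<Rightarrow> real" and \<kappa> :: "nat \<Rightarrow> real"
  assumes expansion: "\<And>n m. \<mu> n m = composition_sum \<kappa> n * composition_sum \<kappa> m
      + (\<Sum>i\<in>{1..n}. \<Sum>j\<in>{1..m}. composition_sum \<kappa> (n - i) * \<kappa>2 i j * composition_sum \<kappa> (m - j))"
    and diag: "summable (\<lambda>n. \<bar>\<mu> n 0\<bar>)"
    and \<kappa>: "(\<lambda>n. \<bar>\<kappa> n\<bar>) summable_on {1..}" and K: "(\<Sum>\<^sub>\<infinity>n\<in>{1..}. \<kappa> n) \<noteq> 1"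
    and \<kappa>2: "(\<lambda>(n, m). \<bar>\<kappa>2 n m\<bar>) summable_on {1..} \<times> {1..}"
  shows "\<exists>R. (\<forall>n. \<mu> n sums R n) \<and>
           R sums ((1 - (\<Sum>\<^sub>\<infinity>n\<in>{1..}. \<kappa> n)) powi -2 * (1 + (\<Sum>\<^sub>\<infinity>(n, m)\<in>{1..} \<times> {1..}. \<kappa>2 n m)))"
proof -
  define P where "P = composition_sum \<kappa>"
  define k where "k = (\<lambda>n. if n = 0 then 0 else \<kappa> n)"
  define q where "q = (\<lambda>n m. if n = 0 \<or> m = 0 then 0 else \<kappa>2 n m)"
  have from_1: "(\<Sum>i\<le>n. h i) = (\<Sum>i\<in>{1..n}. h i)" if "h 0 = 0" for h :: "nat \<Rightarrow> real" and n
    using that by (simp add: atMost_atLeast0 sum.atLeast_Suc_atMost)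
  have "P n = \<mu> n 0" for n
    using expansion[of n 0] by (simp add: P_def)
  then have P: "summable (\<lambda>n. \<bar>P n\<bar>)"
    using diag by simp
  have rec: "P n = (\<Sum>i\<le>n. k i * P (n - i))" if "n \<ge> 1" for n
    using composition_sum_rec[OF that, of \<kappa>]
    by (subst from_1) (auto simp: k_def P_def intro!: sum.cong)
  have inner: "(\<Sum>j\<le>m. q i j * P (m - j)) = (\<Sum>j\<in>{1..m}. \<kappa>2 i j * P (m - j))" if "i \<ge> 1" for i m
    using that by (subst from_1) (auto simp: q_def intro!: sum.cong)
  have f: "\<mu> n m = P n * P m + (\<Sum>i\<le>n. P (n - i) * (\<Sum>j\<le>m. q i j * P (m - j)))" for n m
  proof -
    have "(\<Sum>i\<le>n. P (n - i) * (\<Sum>j\<le>m. q i j * P (m - j)))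
        = (\<Sum>i\<in>{1..n}. P (n - i) * (\<Sum>j\<le>m. q i j * P (m - j)))"
      by (rule from_1) (simp add: q_def)
    also have "\<dots> = (\<Sum>i\<in>{1..n}. \<Sum>j\<in>{1..m}. P (n - i) * \<kappa>2 i j * P (m - j))"
      by (intro sum.cong refl) (simp add: inner sum_distrib_left mult_ac)
    finally show ?thesis
      by (simp add: expansion P_def)
  qed
  have k: "summable (\<lambda>n. \<bar>k n\<bar>)" and K_eq: "(\<Sum>\<^sub>\<infinity>n\<in>{1..}. \<kappa> n) = suminf k"
    using abs_summable_on_atLeast_1_suminf[OF \<kappa>] by (simp_all add: k_def)
  note q_facts = abs_summable_on_atLeast_1_Times_suminf[OF \<kappa>2]
  have q: "summable (\<lambda>j. \<bar>q i j\<bar>)" for i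
    using q_facts(1) by (simp add: q_def)
  have qq: "summable (\<lambda>i. \<Sum>j. \<bar>q i j\<bar>)"
    using q_facts(2) by (simp add: q_def)
  have Q_eq: "(\<Sum>\<^sub>\<infinity>(n, m)\<in>{1..} \<times> {1..}. \<kappa>2 n m) = (\<Sum>i. \<Sum>j. q i j)"
    using q_facts(3) by (simp add: q_def)
  show ?thesis
    unfolding K_eq Q_eq
    using K K_eq by (intro renewal_double_sums[OF P k _ _ rec _ q qq f]) (simp_all add: k_def P_def)
qed

lemma motif_moment_double_sums_cumulants:
  fixes W0 :: "real mat"
  assumes W0: "W0 \<in> carrier_mat N N" and N: "N > 0" and cum: "is_motif_cumulants W0 \<kappa> \<kappa>2"
    and diag: "summable (\<lambda>n. \<bar>g ^ n * motif_moment W0 n 0\<bar>)"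
    and \<kappa>: "(\<lambda>n. \<bar>g ^ n * \<kappa> n\<bar>) summable_on {1..}" and K: "(\<Sum>\<^sub>\<infinity>n\<in>{1..}. g ^ n * \<kappa> n) \<noteq> 1"
    and \<kappa>2: "(\<lambda>(n, m). \<bar>g ^ (n + m) * \<kappa>2 n m\<bar>) summable_on {1..} \<times> {1..}"
  shows "\<exists>R. (\<forall>n. (\<lambda>m. g ^ (n + m) * motif_moment W0 n m) sums R n) \<and>
           R sums ((1 - (\<Sum>\<^sub>\<infinity>n\<in>{1..}. g ^ n * \<kappa> n)) powi -2
                   * (1 + (\<Sum>\<^sub>\<infinity>(n, m)\<in>{1..} \<times> {1..}. g ^ (n + m) * \<kappa>2 n m)))"
proof -
  have "g ^ (n + m) * motif_moment W0 n m
      = composition_sum (\<lambda>i. g ^ i * \<kappa> i) n * composition_sum (\<lambda>i. g ^ i * \<kappa> i) m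
      + (\<Sum>i\<in>{1..n}. \<Sum>j\<in>{1..m}. composition_sum (\<lambda>i. g ^ i * \<kappa> i) (n - i)
           * (g ^ (i + j) * \<kappa>2 i j) * composition_sum (\<lambda>i. g ^ i * \<kappa> i) (m - j))" for n m
    by (rule cumulant_expansion_power_weighted[OF motif_moment_cumulant_expansion[OF W0 N cum]])
  from cumulant_expansion_double_sums[where \<mu> = "\<lambda>n m. g ^ (n + m) * motif_moment W0 n m"
      and \<kappa> = "\<lambda>n. g ^ n * \<kappa> n" and ?\<kappa>2.0 = "\<lambda>n m. g ^ (n + m) * \<kappa>2 n m",
      OF this _ \<kappa> K \<kappa>2] diag
  show ?thesis by simp
qed

theorem theorem1:
  fixes N :: nat and W0 :: "real mat" and a w Sx :: real
    and \<kappa> :: "nat \<Rightarrow> real" and \<kappa>2 :: "nat \<Rightarrow> nat \<Rightarrow> real"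
  assumes N: "N \<ge> 1"
    and W0: "W0 \<in> carrier_mat N N"
    and Sx: "Sx > 0"
    and rho: "spectral_radius (map_mat complex_of_real ((a * w) \<cdot>\<^sub>m W0)) < 1"
    and cum: "is_motif_cumulants W0 \<kappa> \<kappa>2"
    and sum1: "(\<lambda>n. \<bar>real N * a * w\<bar> ^ n * \<bar>\<kappa> n\<bar>) summable_on {1..}"
    and sum1_lt: "(\<Sum>\<^sub>\<infinity>n\<in>{1..}. \<bar>real N * a * w\<bar> ^ n * \<bar>\<kappa> n\<bar>) < 1"
    and sum2: "(\<lambda>(n, m). \<bar>real N * a * w\<bar> ^ (n + m) * \<bar>\<kappa>2 n m\<bar>)
                 summable_on ({1..} \<times> {1..})"
  shows "let g = real N * a * w;
             Sy = Sx \<cdot>\<^sub>m (minv (1\<^sub>m N - (a * w) \<cdot>\<^sub>m W0)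
                    * minv (1\<^sub>m N - (a * w) \<cdot>\<^sub>m transpose_mat W0))
         in mavg Sy / Sx =
            (1 / real N) * (1 - (\<Sum>\<^sub>\<infinity>n\<in>{1..}. g ^ n * \<kappa> n)) powi (-2)
              * (1 + (\<Sum>\<^sub>\<infinity>(n, m)\<in>{1..} \<times> {1..}. g ^ (n + m) * \<kappa>2 n m))"
proof -
  define g where "g = real N * a * w"
  have N0: "N > 0" using N by simp
  note matrix_side =
    motif_moment_double_sums_resolvents[OF W0 N0 rho, unfolded mult.assoc[symmetric], folded g_def]
  obtain R where R: "\<forall>n. (\<lambda>m. g ^ (n + m) * motif_moment W0 n m) sums R n"
    and R_sums: "R sums (real N * mavg (minv (1\<^sub>m N - (a * w) \<cdot>\<^sub>m W0)
                                 * minv (1\<^sub>m N - (a * w) \<cdot>\<^sub>m transpose_mat W0)))"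
    using matrix_side(2) by blast
  have sum1': "(\<lambda>n. \<bar>g ^ n * \<kappa> n\<bar>) summable_on {1..}"
    and sum1_lt': "(\<Sum>\<^sub>\<infinity>n\<in>{1..}. \<bar>g ^ n * \<kappa> n\<bar>) < 1"
    and sum2': "(\<lambda>(n, m). \<bar>g ^ (n + m) * \<kappa>2 n m\<bar>) summable_on {1..} \<times> {1..}"
    using sum1 sum1_lt sum2 by (simp_all add: g_def abs_mult power_abs)
  then have "(\<Sum>\<^sub>\<infinity>n\<in>{1..}. g ^ n * \<kappa> n) \<noteq> 1"
    using norm_infsum_bound[of "\<lambda>n. g ^ n * \<kappa> n" "{1..}"] by auto
  then obtain R' where "\<forall>n. (\<lambda>m. g ^ (n + m) * motif_moment W0 n m) sums R' n"
    and R'_sums: "R' sums ((1 - (\<Sum>\<^sub>\<infinity>n\<in>{1..}. g ^ n * \<kappa> n)) powi -2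
                    * (1 + (\<Sum>\<^sub>\<infinity>(n, m)\<in>{1..} \<times> {1..}. g ^ (n + m) * \<kappa>2 n m)))"
    using motif_moment_double_sums_cumulants[OF W0 N0 cum matrix_side(1) sum1' _ sum2'] by blast
  with R have "R' = R"
    by (auto simp: fun_eq_iff intro: sums_unique2)
  with R_sums R'_sums show ?thesis
    using Sx N0 sums_unique2 unfolding Let_def g_def[symmetric]
    by (simp add: mavg_smult field_simps)
qed

end
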